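(* Let $\mathbb{F}_3$ be the free group on generators $a,b,c$, let $r = aba^{-1}b^{-1}c$, and let $N \subset \mathbb{F}_3$ be the normal closure of $r$. For $w \in N$ define its combinatorial area $A(w)$ as the minimal $d\ge 0$ such that $$w = \prod_{i=1}^d g_i r^{\pm 1} g_i^{-1}, \quad g_i \in \mathbb{F}_3,$$ and define its $(a,b)$-length $l(w)$ as the number of occurrences of the letters $a^{\pm 1}, b^{\pm 1}$ in the cyclic reduction of $w$ (occurrences of $c^{\pm1}$ are not counted). Then $A(w) \leq \frac{1}{2} l(w)$ for every $w \in N$. *)

theory Defs
  imports Complex_Main
begin

text \<open>The free group F_3 on generators a, b, c, modelled concretely by words
  over the letters a, b, c and their inverses; two words represent the same
  group element iff they have the same free reduction.\<close>

datatype gen = Ga | Gb | Gc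

type_synonym letter = "gen \<times> bool"   \<comment> \<open>(x, True) = x, (x, False) = x^-1\<close>
type_synonym word = "letter list"

definition inv_letter :: "letter \<Rightarrow> letter" where
  "inv_letter l = (fst l, \<not> snd l)"

definition inv_word :: "word \<Rightarrow> word" where
  "inv_word w = rev (map inv_letter w)"

fun red_cons :: "letter \<Rightarrow> word \<Rightarrow> word" where
  "red_cons x [] = [x]"
| "red_cons x (y # ys) = (if y = inv_letter x then ys else x # y # ys)"

definition reduce :: "word \<Rightarrow> word" where
  "reduce w = foldr red_cons w []"

function cyc_red :: "word \<Rightarrow> word" where
  "cyc_red w = (if 2 \<le> length w \<and> last w = inv_letter (hd w)
                then cyc_red (butlast (tl w)) else w)"
  by auto
termination by (relation "measure length") (auto simp: length_butlast)

definition cyclic_reduction :: "word \<Rightarrow> word" where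
  "cyclic_reduction w = cyc_red (reduce w)"

definition ab_length :: "word \<Rightarrow> nat" where
  "ab_length w = length (filter (\<lambda>l. fst l \<noteq> Gc) (cyclic_reduction w))"

definition rel :: word where
  "rel = [(Ga, True), (Gb, True), (Ga, False), (Gb, False), (Gc, True)]"

definition conj_prod :: "(word \<times> bool) list \<Rightarrow> word" where
  "conj_prod gs = concat (map (\<lambda>(g, e). g @ (if e then rel else inv_word rel) @ inv_word g) gs)"

definition in_N :: "word \<Rightarrow> bool" where
  "in_N w \<longleftrightarrow> (\<exists>gs. reduce w = reduce (conj_prod gs))"

definition area :: "word \<Rightarrow> nat" where
  "area w = (LEAST d. \<exists>gs. length gs = d \<and> reduce w = reduce (conj_prod gs))"

end

theory Submission
  imports Defs
begin

text \<open>Since \<open>r = [a,b] c\<close>, sending \<open>c\<close> to \<open>[b,a]\<close> identifies \<open>F\<^sub>3/N\<close> with the free group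
  on \<open>a, b\<close>; so \<open>w \<in> N\<close> iff its image \<open>\<phi>(w)\<close> is trivial, and replacing the \<open>c\<close>-letters of \<open>w\<close>
  one by one costs one conjugate of \<open>r\<^sup>\<plusminus>\<^sup>1\<close> each: \<open>A(w)\<close> is at most the number \<open>k\<close> of
  \<open>c\<close>-letters. Area is subadditive and invariant under conjugation, so stripping conjugating end
  letters and splitting off closed subwords reduces the claim to words whose \<open>\<phi>\<close>-prefixes form a
  simple loop in the Cayley tree of \<open>\<langle>a,b\<rangle>\<close>. There each \<open>c\<close>-letter runs along a \<open>[b,a]\<close>-path,
  crossing two \<open>a\<close>-edges and two \<open>b\<close>-edges. The loop is closed, so every edge crossed with nonzero
  net multiplicity by the \<open>c\<close>-letters is traversed by an \<open>a\<^sup>\<plusminus>\<^sup>1\<close> or \<open>b\<^sup>\<plusminus>\<^sup>1\<close> of \<open>w\<close>. Crossings of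
  two \<open>c\<close>-letters cancel only when their base points differ by one of two fixed elements; these
  form a free basis, so a forest count bounds the number of cancelling pairs by \<open>k\<close>, and
  \<open>l(w) \<ge> 4k - 2k = 2k\<close>.\<close>

section \<open>Free reduction\<close>

lemma inv_letter_inv_letter [simp]: "inv_letter (inv_letter x) = x"
  by (simp add: inv_letter_def)

lemma inv_letter_neq [simp]: "inv_letter x \<noteq> x" "x \<noteq> inv_letter x"
  by (auto simp: inv_letter_def prod_eq_iff)

lemma fst_inv_letter [simp]: "fst (inv_letter s) = fst s"
  by (simp add: inv_letter_def)

lemma inv_word_Nil [simp]: "inv_word [] = []"
  by (simp add: inv_word_def)

lemma inv_word_Cons [simp]: "inv_word (x # xs) = inv_word xs @ [inv_letter x]"
  by (simp add: inv_word_def)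

lemma inv_word_append [simp]: "inv_word (xs @ ys) = inv_word ys @ inv_word xs"
  by (simp add: inv_word_def)

lemma inv_word_inv_word [simp]: "inv_word (inv_word xs) = xs"
  by (simp add: inv_word_def rev_map comp_def)

fun reduced :: "word \<Rightarrow> bool" where
  "reduced [] = True"
| "reduced [x] = True"
| "reduced (x # y # ys) \<longleftrightarrow> y \<noteq> inv_letter x \<and> reduced (y # ys)"

lemma reduced_Cons: "reduced (x # ys) \<longleftrightarrow> reduced ys \<and> (ys = [] \<or> hd ys \<noteq> inv_letter x)"
  by (cases ys) auto

lemma reduced_snoc: "reduced (xs @ [y]) \<longleftrightarrow> reduced xs \<and> (xs = [] \<or> last xs \<noteq> inv_letter y)"
  by (induction xs rule: reduced.induct) (auto simp: inv_letter_def prod_eq_iff)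

lemma reduced_butlast: "reduced xs \<Longrightarrow> reduced (butlast xs)"
  by (induction xs rule: reduced.induct) (auto simp: reduced_Cons)

lemma reduced_red_cons: "reduced ys \<Longrightarrow> reduced (red_cons x ys)"
  by (cases ys) (auto simp: reduced_Cons)

lemma reduce_Nil [simp]: "reduce [] = []"
  by (simp add: reduce_def)

lemma reduce_Cons: "reduce (x # xs) = red_cons x (reduce xs)"
  by (simp add: reduce_def)

lemma reduce_append: "reduce (xs @ ys) = foldr red_cons xs (reduce ys)"
  by (simp add: reduce_def)

lemma reduced_reduce [simp]: "reduced (reduce w)"
  by (induction w) (auto simp: reduce_Cons intro: reduced_red_cons)

lemma red_cons_reduced: "reduced (x # ys) \<Longrightarrow> red_cons x ys = x # ys"
  by (cases ys) auto

lemma reduce_reduced: "reduced w \<Longrightarrow> reduce w = w"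
  by (induction w) (auto simp: reduce_Cons reduced_Cons red_cons_reduced)

lemma red_cons_cancel: "reduced ys \<Longrightarrow> red_cons x (red_cons (inv_letter x) ys) = ys"
  by (cases ys rule: reduced.cases) auto

lemma foldr_red_cons_reduced: "reduced zs \<Longrightarrow> reduced (foldr red_cons xs zs)"
  by (induction xs) (auto intro: reduced_red_cons)

lemma foldr_red_cons_red_cons:
  assumes "reduced zs"
  shows "foldr red_cons (red_cons x m) zs = red_cons x (foldr red_cons m zs)"
proof (cases m)
  case (Cons y m')
  then show ?thesis
    using red_cons_cancel[OF foldr_red_cons_reduced[OF assms], of x m'] by auto
qed simp

lemma foldr_red_cons_reduce: "reduced zs \<Longrightarrow> foldr red_cons (reduce xs) zs = foldr red_cons xs zs"
  by (induction xs) (simp_all add: reduce_Cons foldr_red_cons_red_cons)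

lemma reduce_append_reduce_left: "reduce (reduce xs @ ys) = reduce (xs @ ys)"
  by (simp add: reduce_append foldr_red_cons_reduce)

lemma reduce_append_reduce_right: "reduce (xs @ reduce ys) = reduce (xs @ ys)"
  by (simp add: reduce_append reduce_reduced)

lemma reduce_inv_word_append: "reduce (inv_word xs @ xs) = []"
proof (induction xs)
  case (Cons x xs)
  have "reduce (inv_word (x # xs) @ x # xs) = foldr red_cons (inv_word xs) (reduce (inv_letter x # x # xs))"
    by (simp add: reduce_append[symmetric])
  also have "reduce (inv_letter x # x # xs) = reduce xs"
    using red_cons_cancel[of "reduce xs" "inv_letter x"] by (simp add: reduce_Cons)
  finally show ?case
    using Cons by (simp add: reduce_append)
qed simp

section \<open>The free group\<close>

typedef fg = "{w :: word. reduced w}"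
  by (rule exI[of _ "[]"]) simp

lemma reduced_Rep_fg [simp]: "reduced (Rep_fg x)"
  using Rep_fg by simp

lemma Rep_fg_Abs_fg_reduce [simp]: "Rep_fg (Abs_fg (reduce w)) = reduce w"
  by (simp add: Abs_fg_inverse)

instantiation fg :: group_add
begin

definition zero_fg_def: "0 = Abs_fg []"

definition plus_fg_def: "x + y = Abs_fg (reduce (Rep_fg x @ Rep_fg y))"

definition uminus_fg_def: "- x = Abs_fg (reduce (inv_word (Rep_fg x)))"

definition minus_fg_def: "x - y = x + - (y :: fg)"

instance
proof
  fix a b c :: fg
  show "a + b + c = a + (b + c)"
    by (simp add: plus_fg_def reduce_append_reduce_left reduce_append_reduce_right)
  show "0 + a = a" "a + 0 = a"
    by (simp_all add: plus_fg_def zero_fg_def Abs_fg_inverse reduce_reduced Rep_fg_inverse)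
  show "- a + a = 0"
    by (simp add: plus_fg_def zero_fg_def uminus_fg_def reduce_append_reduce_left
        reduce_inv_word_append)
  show "a + - b = a - b"
    by (simp add: minus_fg_def)
qed

end

text \<open>In the non-commutative group \<open>fg\<close>, \<open>a + - b\<close> is a better normal form than \<open>a - b\<close>.\<close>

declare add_uminus_conv_diff [simp del] diff_conv_add_uminus [simp]

lemma conj_eq_0_iff: "(a :: 'a :: group_add) + b - a = 0 \<longleftrightarrow> b = 0"
proof
  assume "a + b - a = 0"
  then have "a + b = a + 0"
    by (simp add: add_eq_0_iff2)
  then show "b = 0"
    by (simp only: add_left_cancel)
qed simp

lemma add_eq_add_iff: "(x :: 'a :: group_add) + a = y + b \<longleftrightarrow> y = x + (a + - b)"
  using diff_eq_eq[of "x + a" b y] by (auto simp: add.assoc)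

definition elem :: "word \<Rightarrow> fg" where
  "elem w = Abs_fg (reduce w)"

lemma Rep_fg_elem [simp]: "Rep_fg (elem w) = reduce w"
  by (simp add: elem_def)

lemma elem_eq_iff: "elem u = elem v \<longleftrightarrow> reduce u = reduce v"
  by (metis Rep_fg_elem elem_def)

lemma elem_Rep_fg [simp]: "elem (Rep_fg x) = x"
  by (simp add: elem_def reduce_reduced Rep_fg_inverse)

lemma elem_Nil [simp]: "elem [] = 0"
  by (simp add: elem_def zero_fg_def)

lemma elem_append: "elem (u @ v) = elem u + elem v"
  by (simp add: elem_def plus_fg_def reduce_append_reduce_left reduce_append_reduce_right)

lemma elem_Cons: "elem (x # v) = elem [x] + elem v"
  using elem_append[of "[x]" v] by simp

lemma elem_inv_word: "elem (inv_word u) = - elem u"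
proof -
  have "elem (inv_word u) + elem u = 0"
    by (simp add: elem_append[symmetric] elem_eq_iff[of _ "[]", simplified] reduce_inv_word_append)
  then show ?thesis
    by (simp add: eq_neg_iff_add_eq_0)
qed

lemma elem_inv_letter: "elem [inv_letter x] = - elem [x]"
  using elem_inv_word[of "[x]"] by simp

lemma elem_conjugate: "elem (g @ v @ inv_word g) = elem g + elem v - elem g"
  by (simp add: elem_append elem_inv_word add.assoc)

lemma elem_reduce [simp]: "elem (reduce w) = elem w"
  by (simp add: elem_eq_iff reduce_reduced)

lemma eq_add_letter_iff: "x = y + elem [s] \<longleftrightarrow> y = x + elem [inv_letter s]"
  by (auto simp: elem_inv_letter add.assoc)

lemma Rep_fg_eq_Nil_iff: "Rep_fg x = [] \<longleftrightarrow> x = 0"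
  by (metis Rep_fg_elem elem_Nil elem_Rep_fg reduce_Nil)

lemma Rep_fg_eq_single_iff: "Rep_fg x = [s] \<longleftrightarrow> x = elem [s]"
  by (metis Rep_fg_elem elem_Rep_fg reduce_reduced reduced.simps(2))

lemma Rep_fg_add_letter:
  "Rep_fg (x + elem [s]) =
    (if Rep_fg x \<noteq> [] \<and> last (Rep_fg x) = inv_letter s then butlast (Rep_fg x) else Rep_fg x @ [s])"
proof -
  have Rep_add: "Rep_fg (x + elem [s]) = reduce (Rep_fg x @ [s])"
    by (simp add: plus_fg_def reduce_reduced)
  show ?thesis
  proof (cases "Rep_fg x \<noteq> [] \<and> last (Rep_fg x) = inv_letter s")
    case True
    then have "Rep_fg x = butlast (Rep_fg x) @ [inv_letter s]"
      by (metis append_butlast_last_id)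
    then have "elem (Rep_fg x @ [s]) = elem (butlast (Rep_fg x))"
      by (metis append.assoc append_Cons append_Nil elem_append elem_inv_letter
          left_minus add.right_neutral elem_Nil)
    then show ?thesis
      using True Rep_add by (simp add: elem_eq_iff reduce_reduced reduced_butlast)
  next
    case False
    then have "reduced (Rep_fg x @ [s])"
      by (auto simp: reduced_snoc)
    with False Rep_add show ?thesis
      by (auto simp: reduce_reduced)
  qed
qed

section \<open>The quotient map and area\<close>

definition subst :: "(letter \<Rightarrow> word) \<Rightarrow> word \<Rightarrow> word" where
  "subst f w = concat (map f w)"

lemma subst_Nil [simp]: "subst f [] = []"
  by (simp add: subst_def)

lemma subst_Cons [simp]: "subst f (x # w) = f x @ subst f w"
  by (simp add: subst_def)

lemma subst_append [simp]: "subst f (u @ v) = subst f u @ subst f v"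
  by (simp add: subst_def)

definition respects_inv :: "(letter \<Rightarrow> word) \<Rightarrow> bool" where
  "respects_inv f \<longleftrightarrow> (\<forall>x. f (inv_letter x) = inv_word (f x))"

lemma respects_invD: "respects_inv f \<Longrightarrow> f (inv_letter x) = inv_word (f x)"
  unfolding respects_inv_def by blast

lemma subst_inv_word: "respects_inv f \<Longrightarrow> subst f (inv_word u) = inv_word (subst f u)"
  by (induction u) (simp_all add: respects_invD)

lemma elem_subst_red_cons:
  assumes "respects_inv f"
  shows "elem (subst f (red_cons x m)) = elem (f x) + elem (subst f m)"
proof (cases m)
  case (Cons y m')
  have "elem (f (inv_letter x)) = - elem (f x)"
    using assms by (simp add: respects_invD elem_inv_word)
  with Cons show ?thesis
    by (simp add: elem_append add.assoc[symmetric])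
qed (simp add: elem_append)

lemma elem_subst_reduce: "respects_inv f \<Longrightarrow> elem (subst f (reduce w)) = elem (subst f w)"
  by (induction w) (simp_all add: reduce_Cons elem_subst_red_cons elem_append)

lemma elem_subst_cong: "respects_inv f \<Longrightarrow> elem u = elem v \<Longrightarrow> elem (subst f u) = elem (subst f v)"
  by (metis elem_eq_iff elem_subst_reduce)

definition comm_ba :: word where
  "comm_ba = [(Gb, True), (Ga, True), (Gb, False), (Ga, False)]"

fun phi_letter :: "letter \<Rightarrow> word" where
  "phi_letter (Gc, True) = comm_ba"
| "phi_letter (Gc, False) = inv_word comm_ba"
| "phi_letter x = [x]"

definition phi :: "word \<Rightarrow> word" where
  "phi = subst phi_letter"

lemma respects_inv_phi_letter: "respects_inv phi_letter"
  unfolding respects_inv_def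
proof
  fix x :: letter
  show "phi_letter (inv_letter x) = inv_word (phi_letter x)"
    by (cases x rule: phi_letter.cases) (simp_all add: inv_letter_def comm_ba_def)
qed

lemma phi_Nil [simp]: "phi [] = []"
  by (simp add: phi_def)

lemma phi_append [simp]: "phi (u @ v) = phi u @ phi v"
  by (simp add: phi_def)

lemma phi_Cons: "phi (x # u) = phi_letter x @ phi u"
  by (simp add: phi_def)

lemma elem_phi_cong: "elem u = elem v \<Longrightarrow> elem (phi u) = elem (phi v)"
  unfolding phi_def by (rule elem_subst_cong[OF respects_inv_phi_letter])

lemma elem_phi_inv_word: "elem (phi (inv_word u)) = - elem (phi u)"
  by (simp add: phi_def subst_inv_word[OF respects_inv_phi_letter] elem_inv_word)

lemma elem_phi_conjugate: "elem (phi (g @ v @ inv_word g)) = elem (phi g) + elem (phi v) - elem (phi g)"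
  by (simp add: elem_append elem_phi_inv_word add.assoc)

lemma elem_phi_conj_prod: "elem (phi (conj_prod gs)) = 0"
proof -
  have phi_rel: "phi rel = inv_word comm_ba @ comm_ba"
    by (simp add: phi_def rel_def comm_ba_def inv_letter_def)
  show ?thesis
    by (induction gs) (auto simp: conj_prod_def elem_append elem_phi_inv_word phi_rel elem_inv_word)
qed

definition count_c :: "word \<Rightarrow> nat" where
  "count_c w = length (filter (\<lambda>l. fst l = Gc) w)"

definition count_ab :: "word \<Rightarrow> nat" where
  "count_ab w = length (filter (\<lambda>l. fst l \<noteq> Gc) w)"

lemma conj_prod_append: "conj_prod (gs @ hs) = conj_prod gs @ conj_prod hs"
  by (simp add: conj_prod_def)

lemma elem_conj_prod_conjugate:
  "elem (conj_prod (map (\<lambda>(h, e). (g @ h, e)) gs)) = elem g + elem (conj_prod gs) - elem g"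
  by (induction gs) (auto simp: conj_prod_def elem_append elem_inv_word add.assoc minus_add)

lemma letter_eq_conj_prod_phi:
  "\<exists>gs. length gs = count_c [x] \<and> elem [x] = elem (conj_prod gs) + elem (phi_letter x)"
proof (cases x rule: phi_letter.cases)
  case 1
  have "elem [x] = elem (conj_prod [(comm_ba, True)]) + elem comm_ba"
    unfolding elem_append[symmetric] elem_eq_iff
    by (simp add: 1 conj_prod_def rel_def comm_ba_def inv_letter_def reduce_def)
  then show ?thesis
    by (intro exI[of _ "[(comm_ba, True)]"]) (simp add: 1 count_c_def)
next
  case 2
  have "elem [x] = elem (conj_prod [([], False)]) + elem (inv_word comm_ba)"
    unfolding elem_append[symmetric] elem_eq_iff
    by (simp add: 2 conj_prod_def rel_def comm_ba_def inv_letter_def reduce_def)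
  then show ?thesis
    by (intro exI[of _ "[([], False)]"]) (simp add: 2 count_c_def)
qed (auto simp: count_c_def conj_prod_def)

lemma word_eq_conj_prod_phi:
  "\<exists>gs. length gs = count_c w \<and> elem w = elem (conj_prod gs) + elem (phi w)"
proof (induction w)
  case (Cons x w)
  obtain gs where gs: "length gs = count_c [x]" "elem [x] = elem (conj_prod gs) + elem (phi_letter x)"
    using letter_eq_conj_prod_phi by blast
  obtain hs where hs: "length hs = count_c w" "elem w = elem (conj_prod hs) + elem (phi w)"
    using Cons.IH by blast
  let ?hs' = "map (\<lambda>(h, e). (phi_letter x @ h, e)) hs"
  have "elem (x # w) = elem (conj_prod gs) + elem (phi_letter x) + (elem (conj_prod hs) + elem (phi w))"
    using gs hs elem_Cons[of x w] by simp
  also have "\<dots> = elem (conj_prod (gs @ ?hs')) + elem (phi (x # w))"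
    by (simp add: elem_conj_prod_conjugate conj_prod_append elem_append phi_Cons add.assoc)
  finally show ?case
    using gs(1) hs(1) by (intro exI[of _ "gs @ ?hs'"]) (simp add: count_c_def)
qed (simp add: conj_prod_def count_c_def)

lemma in_N_elem_iff: "in_N w \<longleftrightarrow> (\<exists>gs. elem w = elem (conj_prod gs))"
  by (simp add: in_N_def elem_eq_iff)

lemma in_N_iff_elem_phi: "in_N w \<longleftrightarrow> elem (phi w) = 0"
proof
  assume "in_N w"
  then obtain gs where "elem w = elem (conj_prod gs)"
    by (auto simp: in_N_elem_iff)
  then have "elem (phi w) = elem (phi (conj_prod gs))"
    by (rule elem_phi_cong)
  then show "elem (phi w) = 0"
    by (simp add: elem_phi_conj_prod)
next
  assume "elem (phi w) = 0"
  then show "in_N w"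
    using word_eq_conj_prod_phi[of w] by (auto simp: in_N_elem_iff)
qed

lemma in_N_conjugate_iff: "elem w = elem (g @ v @ inv_word g) \<Longrightarrow> in_N w \<longleftrightarrow> in_N v"
  by (metis conj_eq_0_iff elem_phi_cong elem_phi_conjugate in_N_iff_elem_phi)

lemma area_le:
  assumes "elem w = elem (conj_prod gs)"
  shows "area w \<le> length gs"
  unfolding area_def using assms by (intro Least_le exI[of _ gs]) (simp add: elem_eq_iff)

lemma area_witness:
  assumes "in_N w"
  obtains gs where "length gs = area w" "elem w = elem (conj_prod gs)"
proof -
  have "\<exists>d gs. length gs = d \<and> reduce w = reduce (conj_prod gs)"
    using assms by (auto simp: in_N_def)
  then have "\<exists>gs. length gs = area w \<and> reduce w = reduce (conj_prod gs)"
    unfolding area_def by (rule LeastI_ex)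
  then show ?thesis
    using that by (auto simp: elem_eq_iff)
qed

lemma area_le_count_c:
  assumes "elem (phi w) = 0"
  shows "area w \<le> count_c w"
proof -
  obtain gs where "length gs = count_c w" "elem w = elem (conj_prod gs) + elem (phi w)"
    using word_eq_conj_prod_phi by blast
  with assms show ?thesis
    using area_le[of w gs] by simp
qed

lemma area_conjugate_le:
  assumes "elem w = elem (g @ v @ inv_word g)" "in_N v"
  shows "area w \<le> area v"
proof -
  obtain gs where "length gs = area v" "elem v = elem (conj_prod gs)"
    using area_witness[OF assms(2)] .
  then show ?thesis
    using assms(1) area_le[of w "map (\<lambda>(h, e). (g @ h, e)) gs"]
    by (simp only: elem_conj_prod_conjugate elem_conjugate length_map)
qed

lemma area_add_le:
  assumes "elem w = elem u + elem v" "in_N u" "in_N v"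
  shows "area w \<le> area u + area v"
proof -
  obtain gs where "length gs = area u" "elem u = elem (conj_prod gs)"
    using area_witness[OF assms(2)] .
  moreover obtain hs where "length hs = area v" "elem v = elem (conj_prod hs)"
    using area_witness[OF assms(3)] .
  ultimately show ?thesis
    using assms(1) area_le[of w "gs @ hs"] by (simp only: conj_prod_append elem_append length_append)
qed

section \<open>Edges of the Cayley tree\<close>

text \<open>\<open>beyond y s z\<close>: removing the edge \<open>{y, y s}\<close> from the Cayley tree separates \<open>z\<close>
  from \<open>y\<close>.\<close>

definition beyond :: "fg \<Rightarrow> letter \<Rightarrow> fg \<Rightarrow> bool" where
  "beyond y s z \<longleftrightarrow> Rep_fg (- y + z) \<noteq> [] \<and> hd (Rep_fg (- y + z)) = s"

text \<open>In a tree, the signed number of traversals of an edge by a path is the change of side.\<close>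

definition crossings :: "fg \<Rightarrow> letter \<Rightarrow> fg \<Rightarrow> word \<Rightarrow> int" where
  "crossings y s z u = of_bool (beyond y s (z + elem u)) - of_bool (beyond y s z)"

lemma crossings_single:
  "crossings y s z [t] = of_bool (z = y \<and> t = s) - of_bool (z = y + elem [s] \<and> t = inv_letter s)"
proof -
  define m where "m = Rep_fg (- y + z)"
  define m' where "m' = (if m \<noteq> [] \<and> last m = inv_letter t then butlast m else m @ [t])"
  have Rep_step: "Rep_fg (- y + (z + elem [t])) = m'"
    unfolding m_def m'_def add.assoc[symmetric] by (rule Rep_fg_add_letter)
  have at_y: "z = y \<longleftrightarrow> m = []"
    unfolding m_def Rep_fg_eq_Nil_iff by (metis add.left_inverse add_minus_cancel add.right_neutral)
  have at_ys: "z = y + elem [s] \<longleftrightarrow> m = [s]"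
    unfolding m_def Rep_fg_eq_single_iff by (metis add_minus_cancel minus_add_cancel)
  have "of_bool (m' \<noteq> [] \<and> hd m' = s) - of_bool (m \<noteq> [] \<and> hd m = s)
      = (of_bool (m = [] \<and> t = s) - of_bool (m = [s] \<and> t = inv_letter s) :: int)"
  proof (cases m rule: reduced.cases)
    case (2 x)
    then show ?thesis by (auto simp: m'_def)
  next
    case (3 x x' xs)
    then have "m' \<noteq> [] \<and> hd m' = x"
      by (simp add: m'_def)
    with 3 show ?thesis by auto
  qed (simp add: m'_def)
  then show ?thesis
    unfolding crossings_def beyond_def Rep_step m_def[symmetric] at_y at_ys .
qed

lemma crossings_Cons: "crossings y s z (t # u) = crossings y s z [t] + crossings y s (z + elem [t]) u"
  unfolding crossings_def elem_Cons[of t u] add.assoc by simp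

lemma crossings_inv_word: "crossings y s z (inv_word u) = - crossings y s (z + - elem u) u"
  unfolding crossings_def elem_inv_word by (simp add: add.assoc)

lemma crossings_comm_ba_a:
  "crossings y (Ga, True) z comm_ba =
    of_bool (y = z + elem [(Gb, True)]) - of_bool (y = z + elem comm_ba)"
proof -
  have "crossings y (Ga, True) z comm_ba =
      of_bool (z + elem [(Gb, True)] = y)
    - of_bool (z + elem [(Gb, True)] + elem [(Ga, True)] + elem [(Gb, False)] = y + elem [(Ga, True)])"
    unfolding comm_ba_def crossings_Cons[of _ _ _ _ "_ # _"] crossings_single
    by (simp add: inv_letter_def)
  also have "(z + elem [(Gb, True)] + elem [(Ga, True)] + elem [(Gb, False)] = y + elem [(Ga, True)])
      \<longleftrightarrow> y = z + elem comm_ba"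
    unfolding comm_ba_def elem_Cons[of _ "_ # _"]
    by (subst eq_add_letter_iff) (simp add: inv_letter_def add.assoc)
  finally show ?thesis
    by auto
qed

lemma crossings_comm_ba_b:
  "crossings y (Gb, True) z comm_ba =
    of_bool (y = z) - of_bool (y = z + elem [(Gb, True), (Ga, True), (Gb, False)])"
proof -
  have "crossings y (Gb, True) z comm_ba =
      of_bool (z = y) - of_bool (z + elem [(Gb, True)] + elem [(Ga, True)] = y + elem [(Gb, True)])"
    unfolding comm_ba_def crossings_Cons[of _ _ _ _ "_ # _"] crossings_single
    by (simp add: inv_letter_def)
  also have "(z + elem [(Gb, True)] + elem [(Ga, True)] = y + elem [(Gb, True)])
      \<longleftrightarrow> y = z + elem [(Gb, True), (Ga, True), (Gb, False)]"
    unfolding elem_Cons[of _ "_ # _"]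
    by (subst eq_add_letter_iff) (simp add: inv_letter_def add.assoc)
  finally show ?thesis
    by auto
qed

text \<open>The endpoint of the edge \<open>{t, t s}\<close> farther from \<open>0\<close>. Every vertex other than \<open>0\<close> is the
  far end of exactly one edge, so a finite subforest has fewer edges than vertices.\<close>

definition far_end :: "letter \<Rightarrow> fg \<Rightarrow> fg" where
  "far_end s t = (if Rep_fg t \<noteq> [] \<and> last (Rep_fg t) = inv_letter s then t else t + elem [s])"

lemma Rep_far_end:
  "Rep_fg (far_end s t) \<noteq> [] \<and>
   last (Rep_fg (far_end s t)) = (if Rep_fg t \<noteq> [] \<and> last (Rep_fg t) = inv_letter s then inv_letter s else s)"
  by (auto simp: far_end_def Rep_fg_add_letter)

lemma inj_far_end: "inj (far_end s)"
proof (rule injI)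
  fix t t' assume eq: "far_end s t = far_end s t'"
  let ?ends_inv = "\<lambda>t. Rep_fg t \<noteq> [] \<and> last (Rep_fg t) = inv_letter s"
  have "?ends_inv t \<longleftrightarrow> ?ends_inv t'"
    using Rep_far_end[of s t] Rep_far_end[of s t'] eq by (auto split: if_splits)
  with eq show "t = t'"
    by (auto simp: far_end_def split: if_splits)
qed

lemma card_forest_edges_le:
  assumes "finite T" "fst s \<noteq> fst s'"
  shows "card {t\<in>T. t + elem [s] \<in> T} + card {t\<in>T. t + elem [s'] \<in> T} \<le> card T"
proof -
  let ?E = "{t\<in>T. t + elem [s] \<in> T}" and ?E' = "{t\<in>T. t + elem [s'] \<in> T}"
  have "far_end s ` ?E \<inter> far_end s' ` ?E' = {}"
  proof -
    have "fst (last (Rep_fg (far_end s t))) \<noteq> fst (last (Rep_fg (far_end s' t')))" for t t'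
      using Rep_far_end[of s t] Rep_far_end[of s' t'] assms(2) by auto
    then have "far_end s t \<noteq> far_end s' t'" for t t'
      by metis
    then show ?thesis
      by blast
  qed
  then have "card ?E + card ?E' = card (far_end s ` ?E \<union> far_end s' ` ?E')"
    using assms(1) by (simp add: card_Un_disjoint card_image inj_on_subset[OF inj_far_end])
  also have "\<dots> \<le> card T"
    using assms(1) by (intro card_mono) (auto simp: far_end_def)
  finally show ?thesis .
qed

lemma card_shift_image:
  fixes h :: "'a :: group_add \<Rightarrow> 'b :: group_add"
  assumes "inj h" and h_add: "\<And>x y. h (x + y) = h x + h y"
  shows "card {z\<in>S. z + d \<in> S} = card {t\<in>h ` S. t + h d \<in> h ` S}"
proof -
  have "h ` {z\<in>S. z + d \<in> S} = {t\<in>h ` S. t + h d \<in> h ` S}"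
  proof (intro equalityI subsetI)
    fix t assume "t \<in> {t\<in>h ` S. t + h d \<in> h ` S}"
    then obtain z z' where "z \<in> S" "z' \<in> S" "t = h z" "h (z + d) = h z'"
      by (auto simp: h_add)
    with \<open>inj h\<close> show "t \<in> h ` {z\<in>S. z + d \<in> S}"
      by (auto dest: injD)
  qed (auto simp flip: h_add)
  then show ?thesis
    by (metis (no_types, lifting) \<open>inj h\<close> card_image inj_on_subset subset_UNIV)
qed

lemma card_shift_uminus:
  fixes d :: "'a :: group_add"
  shows "card {z\<in>S. z + - d \<in> S} = card {z\<in>S. z + d \<in> S}"
proof -
  have "(\<lambda>z. z + d) ` {z\<in>S. z + d \<in> S} = {z\<in>S. z + - d \<in> S}"
    by (force simp: add.assoc intro: image_eqI[of _ _ "_ + - d"])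
  then show ?thesis
    by (metis (no_types, lifting) card_image add_right_imp_eq inj_onI)
qed

text \<open>An automorphism of \<open>F\<^sub>3\<close> fixing \<open>c\<close>. It maps \<open>b a b\<^sup>-\<^sup>1\<close> and \<open>b a b a\<^sup>-\<^sup>1 b\<^sup>-\<^sup>1\<close>, the
  shifts between base points of cancelling \<open>c\<close>-letters, to the generators \<open>b\<close> and \<open>a\<^sup>-\<^sup>1\<close>.\<close>

fun psi_letter :: "letter \<Rightarrow> word" where
  "psi_letter (Ga, True) = [(Gb, False), (Ga, True), (Gb, True), (Ga, False), (Gb, True)]"
| "psi_letter (Ga, False) = [(Gb, False), (Ga, True), (Gb, False), (Ga, False), (Gb, True)]"
| "psi_letter (Gb, True) = [(Gb, False), (Ga, False), (Gb, True)]"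
| "psi_letter (Gb, False) = [(Gb, False), (Ga, True), (Gb, True)]"
| "psi_letter (Gc, e) = [(Gc, e)]"

fun psi_inv_letter :: "letter \<Rightarrow> word" where
  "psi_inv_letter (Ga, True) = [(Gb, True), (Ga, True), (Gb, False), (Ga, False), (Gb, False)]"
| "psi_inv_letter (Ga, False) = [(Gb, True), (Ga, True), (Gb, True), (Ga, False), (Gb, False)]"
| "psi_inv_letter (Gb, True) = [(Gb, True), (Ga, True), (Gb, False)]"
| "psi_inv_letter (Gb, False) = [(Gb, True), (Ga, False), (Gb, False)]"
| "psi_inv_letter (Gc, e) = [(Gc, e)]"

lemma respects_inv_psi_letter: "respects_inv psi_letter"
  unfolding respects_inv_def
proof
  fix x :: letter
  show "psi_letter (inv_letter x) = inv_word (psi_letter x)"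
    by (cases x rule: psi_letter.cases) (simp_all add: inv_letter_def)
qed

lemma respects_inv_psi_inv_letter: "respects_inv psi_inv_letter"
  unfolding respects_inv_def
proof
  fix x :: letter
  show "psi_inv_letter (inv_letter x) = inv_word (psi_inv_letter x)"
    by (cases x rule: psi_inv_letter.cases) (simp_all add: inv_letter_def)
qed

lemma elem_subst_psi_inv_psi: "elem (subst psi_inv_letter (subst psi_letter u)) = elem u"
proof (induction u)
  case (Cons x u)
  have "elem (subst psi_inv_letter (psi_letter x)) = elem [x]"
    unfolding elem_eq_iff by (cases x rule: psi_letter.cases) (simp_all add: inv_letter_def reduce_def)
  with Cons show ?case
    by (simp add: elem_append elem_Cons[of x u])
qed simp

definition psi :: "fg \<Rightarrow> fg" where
  "psi x = elem (subst psi_letter (Rep_fg x))"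

lemma psi_elem: "psi (elem u) = elem (subst psi_letter u)"
  by (simp add: psi_def elem_subst_reduce[OF respects_inv_psi_letter])

lemma psi_add: "psi (x + y) = psi x + psi y"
  by (metis elem_Rep_fg elem_append psi_elem subst_append)

lemma inj_psi: "inj psi"
proof (rule injI)
  fix x y assume "psi x = psi y"
  then have "elem (subst psi_inv_letter (subst psi_letter (Rep_fg x))) =
      elem (subst psi_inv_letter (subst psi_letter (Rep_fg y)))"
    unfolding psi_def by (rule elem_subst_cong[OF respects_inv_psi_inv_letter])
  then show "x = y"
    by (simp add: elem_subst_psi_inv_psi)
qed

lemma card_cancellation_pairs_le:
  assumes "finite S"
  shows "card {z\<in>S. z + (elem [(Gb, True)] - elem comm_ba) \<in> S}
       + card {z\<in>S. z + (0 - elem [(Gb, True), (Ga, True), (Gb, False)]) \<in> S} \<le> card S"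
proof -
  have "psi (elem [(Gb, True)] - elem comm_ba) = elem [(Ga, False)]"
  proof -
    have word: "elem [(Gb, True)] - elem comm_ba = elem ((Gb, True) # inv_word comm_ba)"
      using elem_append[of "[(Gb, True)]" "inv_word comm_ba"] by (simp add: elem_inv_word)
    show ?thesis
      unfolding word psi_elem elem_eq_iff by (simp add: comm_ba_def inv_letter_def reduce_def)
  qed
  moreover have "psi (0 - elem [(Gb, True), (Ga, True), (Gb, False)]) = elem [(Gb, False)]"
  proof -
    have word: "0 - elem [(Gb, True), (Ga, True), (Gb, False)] = elem [(Gb, True), (Ga, False), (Gb, False)]"
      using elem_inv_word[of "[(Gb, True), (Ga, True), (Gb, False)]"] by (simp add: inv_letter_def)
    show ?thesis
      unfolding word psi_elem elem_eq_iff by (simp add: inv_letter_def reduce_def)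
  qed
  ultimately show ?thesis
    using card_forest_edges_le[of "psi ` S" "(Ga, False)" "(Gb, False)"] assms
      card_shift_image[OF inj_psi psi_add, of S] card_image[OF inj_on_subset[OF inj_psi subset_UNIV]]
    by simp
qed

section \<open>Loops in the Cayley tree\<close>

definition phi_prefix :: "word \<Rightarrow> nat \<Rightarrow> fg" where
  "phi_prefix w i = elem (phi (take i w))"

definition c_positions :: "word \<Rightarrow> nat set" where
  "c_positions w = {i. i < length w \<and> fst (w ! i) = Gc}"

definition c_sign :: "word \<Rightarrow> nat \<Rightarrow> int" where
  "c_sign w i = (if snd (w ! i) then 1 else -1)"

text \<open>The letter \<open>c\<^sup>\<plusminus>\<^sup>1\<close> at position \<open>i\<close> traces \<open>[b,a]\<close> forwards from \<open>c_base w i\<close>, or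
  backwards to it.\<close>

definition c_base :: "word \<Rightarrow> nat \<Rightarrow> fg" where
  "c_base w i = (if snd (w ! i) then phi_prefix w i else phi_prefix w (Suc i))"

text \<open>The edges \<open>{y, y s}\<close>, represented by \<open>y\<close>, that a single letter \<open>s\<^sup>\<plusminus>\<^sup>1\<close> of \<open>w\<close> traverses.\<close>

definition traversed :: "word \<Rightarrow> letter \<Rightarrow> fg set" where
  "traversed w s = {y. \<exists>i<length w. (w ! i = s \<and> phi_prefix w i = y)
                                 \<or> (w ! i = inv_letter s \<and> phi_prefix w i = y + elem [s])}"

lemma phi_prefix_0 [simp]: "phi_prefix w 0 = 0"
  by (simp add: phi_prefix_def)

lemma phi_prefix_length: "phi_prefix w (length w) = elem (phi w)"
  by (simp add: phi_prefix_def)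

lemma phi_prefix_Suc: "i < length w \<Longrightarrow> phi_prefix w (Suc i) = phi_prefix w i + elem (phi_letter (w ! i))"
  by (simp add: phi_prefix_def take_Suc_conv_app_nth elem_append phi_def)

lemma phi_prefix_add: "phi_prefix w (i + k) = phi_prefix w i + elem (phi (take k (drop i w)))"
  by (simp add: phi_prefix_def take_add elem_append)

lemma phi_letter_non_c: "fst x \<noteq> Gc \<Longrightarrow> phi_letter x = [x]"
  by (cases x rule: phi_letter.cases) auto

lemma crossings_c_position:
  assumes "i \<in> c_positions w"
  shows "crossings y s (phi_prefix w i) (phi_letter (w ! i)) = c_sign w i * crossings y s (c_base w i) comm_ba"
proof -
  have i: "i < length w" and c: "fst (w ! i) = Gc"
    using assms by (auto simp: c_positions_def)
  show ?thesis
  proof (cases "snd (w ! i)")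
    case True
    then have "w ! i = (Gc, True)"
      using c by (simp add: prod_eq_iff)
    with True show ?thesis
      by (simp add: c_sign_def c_base_def)
  next
    case False
    then have wi: "w ! i = (Gc, False)"
      using c by (simp add: prod_eq_iff)
    then have "phi_prefix w i = c_base w i + elem comm_ba"
      using False by (simp add: c_base_def phi_prefix_Suc[OF i] elem_inv_word add.assoc)
    then show ?thesis
      using False by (simp add: wi c_sign_def crossings_inv_word add.assoc)
  qed
qed

lemma sum_crossings_closed:
  assumes "elem (phi w) = 0"
  shows "(\<Sum>i<length w. crossings y s (phi_prefix w i) (phi_letter (w ! i))) = 0"
proof -
  have "(\<Sum>i<length w. crossings y s (phi_prefix w i) (phi_letter (w ! i)))
      = (\<Sum>i<length w. of_bool (beyond y s (phi_prefix w (Suc i))) - of_bool (beyond y s (phi_prefix w i)))"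
    by (rule sum.cong) (simp_all add: crossings_def phi_prefix_Suc)
  also have "\<dots> = of_bool (beyond y s (phi_prefix w (length w))) - of_bool (beyond y s (phi_prefix w 0))"
    by (rule sum_lessThan_telescope)
  finally show ?thesis
    using assms by (simp add: phi_prefix_length)
qed

text \<open>A closed loop crosses every edge as often in one direction as in the other, so an edge
  crossed with nonzero total multiplicity by the \<open>c\<close>-letters is also crossed by a letter \<open>a\<^sup>\<plusminus>\<^sup>1\<close>
  or \<open>b\<^sup>\<plusminus>\<^sup>1\<close>.\<close>

lemma traversed_if_c_crossings:
  assumes closed: "elem (phi w) = 0"
    and c_crossings: "(\<Sum>i\<in>c_positions w. c_sign w i * crossings y s (c_base w i) comm_ba) \<noteq> 0"
  shows "y \<in> traversed w s"
proof (rule ccontr)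
  assume "y \<notin> traversed w s"
  then have "crossings y s (phi_prefix w i) (phi_letter (w ! i)) = 0"
    if "i < length w" "i \<notin> c_positions w" for i
    using that by (auto simp: traversed_def c_positions_def phi_letter_non_c crossings_single)
  then have "(\<Sum>i<length w. crossings y s (phi_prefix w i) (phi_letter (w ! i)))
      = (\<Sum>i\<in>c_positions w. crossings y s (phi_prefix w i) (phi_letter (w ! i)))"
    by (intro sum.mono_neutral_right) (auto simp: c_positions_def)
  also have "\<dots> = (\<Sum>i\<in>c_positions w. c_sign w i * crossings y s (c_base w i) comm_ba)"
    by (rule sum.cong) (simp_all add: crossings_c_position)
  finally show False
    using c_crossings sum_crossings_closed[OF closed] by simp
qed

lemma traversed_subset_image:
  "traversed w s \<subseteq> (\<lambda>i. if w ! i = s then phi_prefix w i else phi_prefix w i + - elem [s])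
                      ` {i. i < length w \<and> fst (w ! i) = fst s}"
proof
  fix y assume "y \<in> traversed w s"
  then obtain i where i: "i < length w"
    and "w ! i = s \<and> phi_prefix w i = y \<or> w ! i = inv_letter s \<and> phi_prefix w i = y + elem [s]"
    unfolding traversed_def by blast
  then have "y = (if w ! i = s then phi_prefix w i else phi_prefix w i + - elem [s])"
    and "fst (w ! i) = fst s"
    by (auto simp: add.assoc)
  with i show "y \<in> (\<lambda>i. if w ! i = s then phi_prefix w i else phi_prefix w i + - elem [s])
                      ` {i. i < length w \<and> fst (w ! i) = fst s}"
    by blast
qed

lemma finite_traversed: "finite (traversed w s)"
  using traversed_subset_image by (rule finite_subset) simp

lemma card_traversed_le: "card (traversed w s) \<le> card {i. i < length w \<and> fst (w ! i) = fst s}"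
proof -
  let ?f = "\<lambda>i. if w ! i = s then phi_prefix w i else phi_prefix w i + - elem [s]"
  have "card (traversed w s) \<le> card (?f ` {i. i < length w \<and> fst (w ! i) = fst s})"
    by (rule card_mono[OF _ traversed_subset_image]) simp
  also have "\<dots> \<le> card {i. i < length w \<and> fst (w ! i) = fst s}"
    by (rule card_image_le) simp
  finally show ?thesis .
qed

lemma traversed_if_unique_c_hit:
  assumes closed: "elem (phi w) = 0"
    and cross: "\<And>z. crossings y s z comm_ba = of_bool (y = z + u) - of_bool (y = z + v)"
    and "u \<noteq> v"
    and hit: "{i \<in> c_positions w. y = c_base w i + u \<or> y = c_base w i + v} = {i0}"
  shows "y \<in> traversed w s"
proof (rule traversed_if_c_crossings[OF closed])
  have i0: "i0 \<in> c_positions w"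
    using hit by blast
  have "(\<Sum>i\<in>c_positions w. c_sign w i * crossings y s (c_base w i) comm_ba)
      = (\<Sum>i\<in>{i0}. c_sign w i * crossings y s (c_base w i) comm_ba)"
    using hit by (intro sum.mono_neutral_right) (auto simp: c_positions_def cross)
  also have "\<dots> \<noteq> 0"
    using hit \<open>u \<noteq> v\<close> by (auto simp: c_sign_def cross)
  finally show "(\<Sum>i\<in>c_positions w. c_sign w i * crossings y s (c_base w i) comm_ba) \<noteq> 0" .
qed

text \<open>Each \<open>c\<close>-letter crosses the \<open>s\<close>-edges at \<open>c_base + u\<close> and \<open>c_base + v\<close> in opposite
  directions, so two such crossings cancel only for \<open>c\<close>-bases differing by \<open>u - v\<close>.\<close>

lemma traversed_if_uncancelled:
  assumes closed: "elem (phi w) = 0" and inj: "inj_on (c_base w) (c_positions w)"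
    and cross: "\<And>z. crossings y s z comm_ba = of_bool (y = z + u) - of_bool (y = z + v)"
    and S_def: "S = c_base w ` c_positions w" and "z \<in> S"
    and uncancelled: "y = z + u \<and> z + (u - v) \<notin> S \<or> y = z + v \<and> z + - (u - v) \<notin> S"
  shows "y \<in> traversed w s"
proof -
  define d where "d = u - v"
  obtain i0 where i0: "i0 \<in> c_positions w" "z = c_base w i0"
    using \<open>z \<in> S\<close> by (auto simp: S_def)
  have "u \<noteq> v"
    using uncancelled \<open>z \<in> S\<close> by auto
  have hits_only_z: "y = c_base w i + u \<or> y = c_base w i + v \<longleftrightarrow> c_base w i = z"
    if "i \<in> c_positions w" for i
  proof -
    have base: "c_base w i \<in> S"
      using that by (simp add: S_def)
    from uncancelled[folded d_def] show ?thesis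
    proof
      assume "y = z + u \<and> z + d \<notin> S"
      moreover have "z + u = c_base w i + v \<longleftrightarrow> c_base w i = z + d"
        by (simp add: add_eq_add_iff d_def)
      ultimately show ?thesis
        using base by auto
    next
      assume "y = z + v \<and> z + - d \<notin> S"
      moreover have "z + v = c_base w i + u \<longleftrightarrow> c_base w i = z + - d"
        by (simp add: add_eq_add_iff d_def minus_add)
      ultimately show ?thesis
        using base by auto
    qed
  qed
  have "{i \<in> c_positions w. y = c_base w i + u \<or> y = c_base w i + v} = {i0}"
    using hits_only_z i0 inj by (auto simp: inj_on_def)
  then show ?thesis
    by (rule traversed_if_unique_c_hit[OF closed cross \<open>u \<noteq> v\<close>])
qed

lemma card_traversed_ge:
  assumes closed: "elem (phi w) = 0" and inj: "inj_on (c_base w) (c_positions w)"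
    and cross: "\<And>y z. crossings y s z comm_ba = of_bool (y = z + u) - of_bool (y = z + v)"
    and S_def: "S = c_base w ` c_positions w"
  shows "2 * card S \<le> card (traversed w s) + 2 * card {z\<in>S. z + (u - v) \<in> S}"
proof -
  define d where "d = u - v"
  let ?X = "{z\<in>S. z + d \<notin> S}" and ?Y = "{z\<in>S. z + - d \<notin> S}"
  have finite_S: "finite S"
    by (simp add: S_def c_positions_def)
  have "(\<lambda>z. z + u) ` ?X \<union> (\<lambda>z. z + v) ` ?Y \<subseteq> traversed w s"
    using traversed_if_uncancelled[OF closed inj cross S_def] by (auto simp: d_def)
  then have "card ((\<lambda>z. z + u) ` ?X \<union> (\<lambda>z. z + v) ` ?Y) \<le> card (traversed w s)"
    by (rule card_mono[OF finite_traversed])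
  moreover have "(\<lambda>z. z + u) ` ?X \<inter> (\<lambda>z. z + v) ` ?Y = {}"
    by (auto simp: d_def add_eq_add_iff)
  ultimately have "card ?X + card ?Y \<le> card (traversed w s)"
    using finite_S by (simp add: card_Un_disjoint card_image inj_on_def)
  moreover have card_split: "card S = card {z\<in>S. P z} + card {z\<in>S. \<not> P z}" for P
    using card_Int_Diff[OF finite_S, of "Collect P"] by (simp add: Int_def set_diff_eq)
  ultimately show ?thesis
    using card_split[of "\<lambda>z. z + d \<in> S"] card_split[of "\<lambda>z. z + - d \<in> S"] card_shift_uminus[of S d]
    unfolding d_def[symmetric] by linarith
qed

definition simple_loop :: "word \<Rightarrow> bool" where
  "simple_loop w \<longleftrightarrow>
    (\<forall>i j. i < j \<and> j \<le> length w \<and> phi_prefix w i = phi_prefix w j \<longrightarrow> i = 0 \<and> j = length w)"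

lemma simple_loopD:
  "simple_loop w \<Longrightarrow> i < j \<Longrightarrow> j \<le> length w \<Longrightarrow> phi_prefix w i = phi_prefix w j
    \<Longrightarrow> i = 0 \<and> j = length w"
  unfolding simple_loop_def by blast

lemma conjugate_if_last_inv_first:
  assumes "2 \<le> length w" "w ! (length w - 1) = inv_letter (w ! 0)"
  shows "\<exists>x m. w = x # m @ [inv_letter x]"
proof -
  obtain x r where w: "w = x # r"
    using assms(1) by (cases w) auto
  with assms(1) have "r \<noteq> []"
    by auto
  then have "inv_letter x = last r"
    using assms(2) unfolding w by (cases r rule: rev_cases) auto
  with w \<open>r \<noteq> []\<close> show ?thesis
    by (metis append_butlast_last_id)
qed

lemma simple_loop_opposite_c_letters:
  assumes simple: "simple_loop w" and not_conj: "\<And>x m. w \<noteq> x # m @ [inv_letter x]"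
    and i: "i < length w" "w ! i = (Gc, True)" and j: "j < length w" "w ! j = (Gc, False)"
  shows "phi_prefix w i \<noteq> phi_prefix w (Suc j)"
proof
  assume eq: "phi_prefix w i = phi_prefix w (Suc j)"
  have not_conj_shape: "\<not> (2 \<le> length w \<and> w ! (length w - 1) = inv_letter (w ! 0))"
    using conjugate_if_last_inv_first not_conj by blast
  consider "i < Suc j" | "i = Suc j" | "Suc j < i"
    by linarith
  then show False
  proof cases
    case 1
    then have "i = 0" "length w = Suc j"
      using simple_loopD[OF simple _ _ eq] j(1) by simp_all
    with not_conj_shape i j show False
      by (cases j) (auto simp: inv_letter_def)
  next
    case 2
    then have "phi_prefix w j = phi_prefix w (Suc (Suc j))"
      using i j by (simp add: phi_prefix_Suc elem_inv_word add.assoc)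
    then have "j = 0" "length w = 2"
      using simple_loopD[OF simple, of j "Suc (Suc j)"] i 2 by simp_all
    then show False
      using not_conj_shape i j 2 by (auto simp: inv_letter_def)
  next
    case 3
    then show False
      using simple_loopD[OF simple _ _ eq[symmetric]] i(1) by simp
  qed
qed

lemma inj_on_c_base:
  assumes simple: "simple_loop w" and not_conj: "\<And>x m. w \<noteq> x # m @ [inv_letter x]"
  shows "inj_on (c_base w) (c_positions w)"
proof (rule inj_onI)
  fix i j assume "i \<in> c_positions w" "j \<in> c_positions w" and eq: "c_base w i = c_base w j"
  then have i: "i < length w" "fst (w ! i) = Gc" and j: "j < length w" "fst (w ! j) = Gc"
    by (auto simp: c_positions_def)
  have equal_prefixes: "a = b" if "phi_prefix w a = phi_prefix w b" "a \<le> length w" "b \<le> length w"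
    "0 < a \<and> 0 < b \<or> a < length w \<and> b < length w" for a b
    using that simple_loopD[OF simple, of a b] simple_loopD[OF simple, of b a]
    by (cases a b rule: linorder_cases) auto
  show "i = j"
  proof (cases "snd (w ! i)"; cases "snd (w ! j)")
    assume "snd (w ! i)" "snd (w ! j)"
    with eq i j show "i = j"
      by (intro equal_prefixes) (simp_all add: c_base_def)
  next
    assume "\<not> snd (w ! i)" "\<not> snd (w ! j)"
    with eq i j show "i = j"
      using equal_prefixes[of "Suc i" "Suc j"] by (simp add: c_base_def)
  next
    assume "snd (w ! i)" "\<not> snd (w ! j)"
    with eq i j show "i = j"
      using simple_loop_opposite_c_letters[OF simple not_conj, of i j] by (simp add: c_base_def prod_eq_iff)
  next
    assume "\<not> snd (w ! i)" "snd (w ! j)"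
    with eq i j show "i = j"
      using simple_loop_opposite_c_letters[OF simple not_conj, of j i] by (simp add: c_base_def prod_eq_iff)
  qed
qed

lemma count_c_eq_card: "count_c w = card (c_positions w)"
  unfolding count_c_def c_positions_def by (rule length_filter_conv_card)

lemma count_ab_eq_card:
  "count_ab w = card {i. i < length w \<and> fst (w ! i) = Ga} + card {i. i < length w \<and> fst (w ! i) = Gb}"
proof -
  let ?A = "{i. i < length w \<and> fst (w ! i) = Ga}" and ?B = "{i. i < length w \<and> fst (w ! i) = Gb}"
  have "{i. i < length w \<and> fst (w ! i) \<noteq> Gc} = ?A \<union> ?B"
    by (auto intro: gen.exhaust)
  moreover have "card (?A \<union> ?B) = card ?A + card ?B"
    by (rule card_Un_disjoint) auto
  ultimately show ?thesis
    unfolding count_ab_def length_filter_conv_card by simp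
qed

lemma simple_loop_count_c_le:
  assumes closed: "elem (phi w) = 0" and simple: "simple_loop w"
    and not_conj: "\<And>x m. w \<noteq> x # m @ [inv_letter x]"
  shows "2 * count_c w \<le> count_ab w"
proof -
  define S where "S = c_base w ` c_positions w"
  have inj: "inj_on (c_base w) (c_positions w)"
    using simple not_conj by (rule inj_on_c_base)
  then have "card S = count_c w"
    by (simp add: S_def card_image count_c_eq_card)
  moreover have "2 * card S \<le> card (traversed w (Ga, True))
      + 2 * card {z\<in>S. z + (elem [(Gb, True)] - elem comm_ba) \<in> S}"
    using closed inj crossings_comm_ba_a S_def by (rule card_traversed_ge)
  moreover have "2 * card S \<le> card (traversed w (Gb, True))
      + 2 * card {z\<in>S. z + (0 - elem [(Gb, True), (Ga, True), (Gb, False)]) \<in> S}"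
    by (rule card_traversed_ge[OF closed inj _ S_def]) (simp add: crossings_comm_ba_b)
  moreover have "finite S"
    by (simp add: S_def c_positions_def)
  ultimately show ?thesis
    using card_cancellation_pairs_le[of S] card_traversed_le[of w "(Ga, True)"]
      card_traversed_le[of w "(Gb, True)"] count_ab_eq_card[of w]
    by simp
qed

section \<open>Reduction to simple loops\<close>

lemma simple_loop_if_no_closed_subword:
  assumes "\<And>s t v. w = s @ t @ v \<Longrightarrow> t \<noteq> [] \<Longrightarrow> s @ v \<noteq> [] \<Longrightarrow> \<not> in_N t"
  shows "simple_loop w"
  unfolding simple_loop_def
proof (intro allI impI)
  fix i j assume ij: "i < j \<and> j \<le> length w \<and> phi_prefix w i = phi_prefix w j"
  let ?t = "take (j - i) (drop i w)"
  have "w = take i w @ ?t @ drop j w"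
    using ij by (metis append.assoc append_take_drop_id le_add_diff_inverse less_imp_le take_add)
  moreover have "?t \<noteq> []"
    using ij by simp
  moreover have "in_N ?t"
  proof -
    have "phi_prefix w i + elem (phi ?t) = phi_prefix w i + 0"
      using ij phi_prefix_add[of w i "j - i"] by simp
    then show ?thesis
      by (simp only: add_left_cancel in_N_iff_elem_phi)
  qed
  ultimately have "take i w @ drop j w = []"
    using assms by blast
  then show "i = 0 \<and> j = length w"
    using ij by auto
qed

lemma area_split_closed_subword:
  assumes "in_N (s @ t @ v)" "in_N t"
  shows "in_N (s @ v)" "area (s @ t @ v) \<le> area (s @ v) + area t"
proof -
  show "in_N (s @ v)"
    using assms by (simp add: in_N_iff_elem_phi elem_append)
  moreover have "elem (s @ t @ v) = elem (s @ v) + elem (inv_word v @ t @ v)"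
    by (simp add: elem_append elem_inv_word add.assoc)
  moreover have "in_N (inv_word v @ t @ v)"
    using assms(2) in_N_conjugate_iff[of _ "inv_word v" t] by simp
  ultimately have "area (s @ t @ v) \<le> area (s @ v) + area (inv_word v @ t @ v)"
    by (intro area_add_le)
  also have "area (inv_word v @ t @ v) \<le> area t"
    using assms(2) by (intro area_conjugate_le[of _ "inv_word v"]) simp_all
  finally show "area (s @ t @ v) \<le> area (s @ v) + area t"
    by simp
qed

lemma double_area_le_count_ab: "in_N w \<Longrightarrow> 2 * area w \<le> count_ab w"
proof (induction "length w" arbitrary: w rule: less_induct)
  case less
  show ?case
  proof (cases "\<exists>x m. w = x # m @ [inv_letter x]")
    case True
    then obtain x m where w: "w = x # m @ [inv_letter x]"
      by blast
    then have conj: "elem w = elem ([x] @ m @ inv_word [x])"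
      by simp
    then have "in_N m"
      using in_N_conjugate_iff less.prems by blast
    have "area w \<le> area m"
      using conj \<open>in_N m\<close> by (rule area_conjugate_le)
    moreover have "2 * area m \<le> count_ab m"
      using less.hyps \<open>in_N m\<close> by (simp add: w)
    moreover have "count_ab m \<le> count_ab w"
      by (simp add: w count_ab_def)
    ultimately show ?thesis
      by simp
  next
    case not_conj: False
    show ?thesis
    proof (cases "\<exists>s t v. w = s @ t @ v \<and> t \<noteq> [] \<and> s @ v \<noteq> [] \<and> in_N t")
      case True
      then obtain s t v where w: "w = s @ t @ v" and "t \<noteq> []" "s @ v \<noteq> []" "in_N t"
        by blast
      then have "in_N (s @ v)" "area w \<le> area (s @ v) + area t"
        using less.prems area_split_closed_subword by blast+
      moreover have "2 * area (s @ v) \<le> count_ab (s @ v)" "2 * area t \<le> count_ab t"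
        using less.hyps \<open>in_N (s @ v)\<close> \<open>in_N t\<close> \<open>t \<noteq> []\<close> \<open>s @ v \<noteq> []\<close> by (simp_all add: w)
      moreover have "count_ab w = count_ab (s @ v) + count_ab t"
        by (simp add: w count_ab_def)
      ultimately show ?thesis
        by simp
    next
      case False
      then have "simple_loop w"
        by (intro simple_loop_if_no_closed_subword) blast
      with less.prems not_conj have "2 * count_c w \<le> count_ab w"
        by (intro simple_loop_count_c_le) (auto simp: in_N_iff_elem_phi)
      moreover have "area w \<le> count_c w"
        using less.prems by (simp add: area_le_count_c in_N_iff_elem_phi)
      ultimately show ?thesis
        by simp
    qed
  qed
qed

declare cyc_red.simps [simp del] \<comment> \<open>it would loop in the simplifier\<close>

lemma cyc_red_conjugate: "\<exists>g. w = g @ cyc_red w @ inv_word g"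
proof (induction w rule: cyc_red.induct)
  case (1 w)
  show ?case
  proof (cases "2 \<le> length w \<and> last w = inv_letter (hd w)")
    case True
    then have cyc_red_w: "cyc_red w = cyc_red (butlast (tl w))"
      by (subst cyc_red.simps) (rule if_P)
    obtain x r where "w = x # r" "r \<noteq> []"
      using True by (cases w) (auto simp: Suc_le_length_iff)
    with True have w: "w = hd w # butlast (tl w) @ [inv_letter (hd w)]"
      by (metis append_butlast_last_id last_ConsR list.sel(1,3))
    obtain g where "butlast (tl w) = g @ cyc_red (butlast (tl w)) @ inv_word g"
      using 1 True by blast
    with w have "w = (hd w # g) @ cyc_red w @ inv_word (hd w # g)"
      unfolding cyc_red_w by (metis append.assoc append_Cons inv_word_Cons)
    then show ?thesis
      by blast
  next
    case False
    then have "cyc_red w = w"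
      by (subst cyc_red.simps) (rule if_not_P)
    then show ?thesis
      by (intro exI[of _ "[]"]) simp
  qed
qed

theorem theorem1p2:
  fixes w :: word
  assumes "in_N w"
  shows "real (area w) \<le> real (ab_length w) / 2"
proof -
  obtain g where "reduce w = g @ cyclic_reduction w @ inv_word g"
    using cyc_red_conjugate[of "reduce w"] unfolding cyclic_reduction_def by blast
  then have conj: "elem w = elem (g @ cyclic_reduction w @ inv_word g)"
    by (metis elem_reduce)
  moreover have "in_N (cyclic_reduction w)"
    using conj assms in_N_conjugate_iff by blast
  ultimately have "area w \<le> area (cyclic_reduction w)"
    by (rule area_conjugate_le)
  moreover have "2 * area (cyclic_reduction w) \<le> ab_length w"
    using double_area_le_count_ab[OF \<open>in_N (cyclic_reduction w)\<close>]
    by (simp add: ab_length_def count_ab_def)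
  ultimately show ?thesis
    by simp
qed

end
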